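(* Let $\mathcal C$ be a category and $n\ge0$. Every isomorphism in $Z^n(\mathcal C)$ is a degeneracy map.
   Context: Notation: for $n\ge 0$, $[n]$ denotes $\{0,\dots,n-1\}$; $\Delta_+$ is the category of these finite total orders and order-preserving maps. For monotone $\varphi:[n]\to[m]$ define $\hat\varphi:[m+1]\to[n+1]$ by $\hat\varphi(i)=\min(\{j\in[n]:\varphi(j)\ge i\}\cup\{n\})$. Zigzags: in a category $\mathcal C$, a zigzag $X$ of length $n$ is a diagram $X(r_0)\xrightarrow{x_0} X(s_0)\xleftarrow{x'_0} X(r_1)\to\cdots\xrightarrow{x_{n-1}} X(s_{n-1})\xleftarrow{x'_{n-1}} X(r_n)$. A zigzag map $f:X\to Y$ (lengths $n$, $m$) consists of a monotone $f_s:[n]\to[m]$, regular slices $f(r_i):X(r_{\hat{f_s}(i)})\to Y(r_i)$ for $0\le i\le m$ and singular slices $f(s_j):X(s_j)\to Y(s_{f_s(j)})$ for $0\le j<n$, such that for each $0\le i<m$: if $f_s^{-1}(i)\neq\emptyset$ with least element $p$, greatest $q$, then $f(s_p)\circ x_p=y_i\circ f(r_i)$, $f(s_q)\circ x'_q=y'_i\circ f(r_{i+1})$, $f(s_j)\circ x'_j=f(s_{j+1})\circ x_{j+1}$ for $p\le j<q$; if $f_s^{-1}(i)=\emptyset$ then $y_i\circ f(r_i)=y'_i\circ f(r_{i+1})$. Composition: $(g\circ f)_s=g_s\circ f_s$, $(g\circ f)(s_j)=g(s_{f_s(j)})\circ f(s_j)$, $(g\circ f)(r_i)=g(r_i)\circ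 f(r_{\hat{g_s}(i)})$. This gives a category $Z(\mathcal C)$; $Z^0(\mathcal C)=\mathcal C$, $Z^n(\mathcal C)=Z(Z^{n-1}(\mathcal C))$. $\pi:Z(\mathcal C)\to\Delta_+$ sends a zigzag of length $n$ to $[n]$ and $f$ to $f_s$; $f$ is $\pi$-vertical if $\pi(f)$ is an identity; $f:x\to y$ is $\pi$-cocartesian if for every $h:x\to y'$ and $u:\pi(y)\to\pi(y')$ with $u\circ\pi(f)=\pi(h)$ there is a unique $v:y\to y'$ with $v\circ f=h$, $\pi(v)=u$. Degeneracy maps in $Z^n(\mathcal C)$ (by induction on $n$): in $Z^0(\mathcal C)$ the isomorphisms; for $n\ge1$ the maps generated under composition by simple degeneracy maps (the $\pi$-cocartesian maps $f$ with $\pi(f)$ a monomorphism of $\Delta_+$) and parallel degeneracy maps (the $\pi$-vertical maps whose regular and singular slices are all degeneracy maps in $Z^{n-1}(\mathcal C)$). *)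

theory Defs
  imports Main
begin

record ('o,'m) cat =
  Ob   :: "'o set"
  Ar   :: "'m set"
  cdom :: "'m \<Rightarrow> 'o"
  ccod :: "'m \<Rightarrow> 'o"
  idn  :: "'o \<Rightarrow> 'm"
  comp :: "'m \<Rightarrow> 'm \<Rightarrow> 'm"   (* comp K g f = g \<circ> f *)

definition Hom :: "('o,'m,'x) cat_scheme \<Rightarrow> 'o \<Rightarrow> 'o \<Rightarrow> 'm set" where
  "Hom K x y = {f \<in> Ar K. cdom K f = x \<and> ccod K f = y}"

definition is_category :: "('o,'m) cat \<Rightarrow> bool" where
  "is_category K \<longleftrightarrow>
     (\<forall>f\<in>Ar K. cdom K f \<in> Ob K \<and> ccod K f \<in> Ob K) \<and>
     (\<forall>x\<in>Ob K. idn K x \<in> Hom K x x) \<and>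
     (\<forall>f\<in>Ar K. \<forall>g\<in>Ar K. ccod K f = cdom K g \<longrightarrow>
         comp K g f \<in> Hom K (cdom K f) (ccod K g)) \<and>
     (\<forall>f\<in>Ar K. comp K f (idn K (cdom K f)) = f \<and> comp K (idn K (ccod K f)) f = f) \<and>
     (\<forall>f\<in>Ar K. \<forall>g\<in>Ar K. \<forall>h\<in>Ar K. ccod K f = cdom K g \<longrightarrow> ccod K g = cdom K h \<longrightarrow>
         comp K h (comp K g f) = comp K (comp K h g) f)"

definition is_iso :: "('o,'m) cat \<Rightarrow> 'm \<Rightarrow> bool" where
  "is_iso K f \<longleftrightarrow> f \<in> Ar K \<and>
     (\<exists>g\<in>Ar K. cdom K g = ccod K f \<and> ccod K g = cdom K f \<and>
        comp K g f = idn K (cdom K f) \<and> comp K f g = idn K (ccod K f))"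

text \<open>A monotone map [n] \<rightarrow> [m] is represented by the list of its values.\<close>

definition delta_map :: "nat \<Rightarrow> nat \<Rightarrow> nat list \<Rightarrow> bool" where
  "delta_map n m \<phi> \<longleftrightarrow> length \<phi> = n \<and> (\<forall>j<n. \<phi> ! j < m) \<and>
      (\<forall>i j. i \<le> j \<and> j < n \<longrightarrow> \<phi> ! i \<le> \<phi> ! j)"

definition delta_mono :: "nat \<Rightarrow> nat list \<Rightarrow> bool" where
  "delta_mono m \<phi> \<longleftrightarrow> delta_map (length \<phi>) m \<phi> \<and>
     (\<forall>k a b. delta_map k (length \<phi>) a \<and> delta_map k (length \<phi>) b \<and>
        map ((!) \<phi>) a = map ((!) \<phi>) b \<longrightarrow> a = b)"

definition hat :: "nat list \<Rightarrow> nat \<Rightarrow> nat" where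
  "hat \<phi> i = (LEAST j. j = length \<phi> \<or> (j < length \<phi> \<and> i \<le> \<phi> ! j))"

datatype ('o,'m) zobj =
    OB 'o
  | OZ "('o,'m) zobj list" "('o,'m) zobj list" "('o,'m) zarr list" "('o,'m) zarr list"
    (* regular objects r_0..r_n, singular objects s_0..s_{n-1},
       forward maps x_i : r_i \<rightarrow> s_i, backward maps x'_i : r_{i+1} \<rightarrow> s_i *)
and ('o,'m) zarr =
    AB 'm
  | AZ "('o,'m) zobj" "('o,'m) zobj" "nat list" "('o,'m) zarr list" "('o,'m) zarr list"
    (* source, target, f_s, regular slices f(r_i), singular slices f(s_j) *)

definition zr :: "('o,'m) zobj \<Rightarrow> ('o,'m) zobj list" where
  "zr X = (case X of OZ r s a b \<Rightarrow> r | _ \<Rightarrow> [])"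
definition zs :: "('o,'m) zobj \<Rightarrow> ('o,'m) zobj list" where
  "zs X = (case X of OZ r s a b \<Rightarrow> s | _ \<Rightarrow> [])"
definition zx :: "('o,'m) zobj \<Rightarrow> ('o,'m) zarr list" where
  "zx X = (case X of OZ r s a b \<Rightarrow> a | _ \<Rightarrow> [])"
definition zy :: "('o,'m) zobj \<Rightarrow> ('o,'m) zarr list" where
  "zy X = (case X of OZ r s a b \<Rightarrow> b | _ \<Rightarrow> [])"
definition zlen :: "('o,'m) zobj \<Rightarrow> nat" where
  "zlen X = length (zs X)"

definition zdom :: "('o,'m) zarr \<Rightarrow> ('o,'m) zobj" where
  "zdom F = (case F of AZ X Y fs R S \<Rightarrow> X | _ \<Rightarrow> undefined)"
definition zcod :: "('o,'m) zarr \<Rightarrow> ('o,'m) zobj" where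
  "zcod F = (case F of AZ X Y fs R S \<Rightarrow> Y | _ \<Rightarrow> undefined)"
definition zfs :: "('o,'m) zarr \<Rightarrow> nat list" where
  "zfs F = (case F of AZ X Y fs R S \<Rightarrow> fs | _ \<Rightarrow> [])"
definition zR :: "('o,'m) zarr \<Rightarrow> ('o,'m) zarr list" where
  "zR F = (case F of AZ X Y fs R S \<Rightarrow> R | _ \<Rightarrow> [])"
definition zS :: "('o,'m) zarr \<Rightarrow> ('o,'m) zarr list" where
  "zS F = (case F of AZ X Y fs R S \<Rightarrow> S | _ \<Rightarrow> [])"

type_synonym ('o,'m) zcat = "(('o,'m) zobj, ('o,'m) zarr) cat"

definition lift :: "('o,'m) cat \<Rightarrow> ('o,'m) zcat" where
  "lift C = \<lparr> Ob = OB ` Ob C, Ar = AB ` Ar C,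
     cdom = (\<lambda>F. case F of AB f \<Rightarrow> OB (cdom C f) | _ \<Rightarrow> undefined),
     ccod = (\<lambda>F. case F of AB f \<Rightarrow> OB (ccod C f) | _ \<Rightarrow> undefined),
     idn = (\<lambda>X. case X of OB x \<Rightarrow> AB (idn C x) | _ \<Rightarrow> undefined),
     comp = (\<lambda>G F. case (G, F) of (AB g, AB f) \<Rightarrow> AB (comp C g f) | _ \<Rightarrow> undefined) \<rparr>"

definition zobj_ok :: "('o,'m) zcat \<Rightarrow> ('o,'m) zobj \<Rightarrow> bool" where
  "zobj_ok D X \<longleftrightarrow> (\<exists>rs ss xs ys. X = OZ rs ss xs ys \<and>
     length rs = Suc (length ss) \<and> length xs = length ss \<and> length ys = length ss \<and>
     set rs \<subseteq> Ob D \<and> set ss \<subseteq> Ob D \<and>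
     (\<forall>i<length ss. xs ! i \<in> Hom D (rs ! i) (ss ! i) \<and>
                    ys ! i \<in> Hom D (rs ! Suc i) (ss ! i)))"

definition zarr_ok :: "('o,'m) zcat \<Rightarrow> ('o,'m) zarr \<Rightarrow> bool" where
  "zarr_ok D F \<longleftrightarrow> (\<exists>X Y fs R S. F = AZ X Y fs R S \<and>
     zobj_ok D X \<and> zobj_ok D Y \<and>
     delta_map (zlen X) (zlen Y) fs \<and>
     length R = Suc (zlen Y) \<and> length S = zlen X \<and>
     (\<forall>i\<le>zlen Y. R ! i \<in> Hom D (zr X ! hat fs i) (zr Y ! i)) \<and>
     (\<forall>j<zlen X. S ! j \<in> Hom D (zs X ! j) (zs Y ! (fs ! j))) \<and>
     (\<forall>i<zlen Y.
        (let P = {j. j < zlen X \<and> fs ! j = i} in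
         if P \<noteq> {} then
           (let p = Min P; q = Max P in
             comp D (S ! p) (zx X ! p) = comp D (zx Y ! i) (R ! i) \<and>
             comp D (S ! q) (zy X ! q) = comp D (zy Y ! i) (R ! Suc i) \<and>
             (\<forall>j. p \<le> j \<and> j < q \<longrightarrow>
                 comp D (S ! j) (zy X ! j) = comp D (S ! Suc j) (zx X ! Suc j)))
         else comp D (zx Y ! i) (R ! i) = comp D (zy Y ! i) (R ! Suc i))))"

definition Zc :: "('o,'m) zcat \<Rightarrow> ('o,'m) zcat" where
  "Zc D = \<lparr> Ob = {X. zobj_ok D X}, Ar = {F. zarr_ok D F},
     cdom = zdom, ccod = zcod,
     idn = (\<lambda>X. AZ X X [0..<zlen X] (map (idn D) (zr X)) (map (idn D) (zs X))),
     comp = (\<lambda>G F. AZ (zdom F) (zcod G) (map (\<lambda>j. zfs G ! j) (zfs F))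
                (map (\<lambda>i. comp D (zR G ! i) (zR F ! hat (zfs G) i)) [0..<length (zR G)])
                (map (\<lambda>j. comp D (zS G ! (zfs F ! j)) (zS F ! j)) [0..<length (zS F)])) \<rparr>"

definition Zn :: "('o,'m) cat \<Rightarrow> nat \<Rightarrow> ('o,'m) zcat" where
  "Zn C n = (Zc ^^ n) (lift C)"

definition pi_vertical :: "('o,'m) zarr \<Rightarrow> bool" where
  "pi_vertical F \<longleftrightarrow> zlen (zdom F) = zlen (zcod F) \<and> zfs F = [0..<zlen (zdom F)]"

definition pi_cocartesian :: "('o,'m) zcat \<Rightarrow> ('o,'m) zarr \<Rightarrow> bool" where
  "pi_cocartesian D F \<longleftrightarrow> F \<in> Ar (Zc D) \<and>
     (\<forall>H\<in>Ar (Zc D). \<forall>u. zdom H = zdom F \<and> delta_map (zlen (zcod F)) (zlen (zcod H)) u \<and>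
        map (\<lambda>j. u ! j) (zfs F) = zfs H \<longrightarrow>
        (\<exists>!V. V \<in> Ar (Zc D) \<and> zdom V = zcod F \<and> zcod V = zcod H \<and>
              comp (Zc D) V F = H \<and> zfs V = u))"

inductive_set comp_closure :: "('o,'m) cat \<Rightarrow> 'm set \<Rightarrow> 'm set"
  for K :: "('o,'m) cat" and S :: "'m set" where
  base: "f \<in> S \<Longrightarrow> f \<in> comp_closure K S"
| step: "f \<in> comp_closure K S \<Longrightarrow> g \<in> comp_closure K S \<Longrightarrow> ccod K f = cdom K g \<Longrightarrow>
         comp K g f \<in> comp_closure K S"

fun degen :: "('o,'m) cat \<Rightarrow> nat \<Rightarrow> ('o,'m) zarr set" where
  "degen C 0 = {f. is_iso (lift C) f}"
| "degen C (Suc n) = comp_closure (Zc (Zn C n))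
     ({F. pi_cocartesian (Zn C n) F \<and> delta_mono (zlen (zcod F)) (zfs F)}
      \<union> {F. F \<in> Ar (Zc (Zn C n)) \<and> pi_vertical F \<and>
            set (zR F) \<subseteq> degen C n \<and> set (zS F) \<subseteq> degen C n})"

end

theory Submission
  imports Defs
begin

text \<open>An isomorphism of zigzags lies over an isomorphism of \<open>\<Delta>\<^sub>+\<close>, which must be an identity,
  so it is \<open>\<pi>\<close>-vertical; its slices are then inverted by the slices of the inverse, hence are
  isomorphisms one level down. By induction they are degeneracy maps, which makes the
  isomorphism a parallel degeneracy map.\<close>

lemma map_nth_eq_uptD:
  assumes "map ((!) gs) fs = [0..<n]" and "j < n"
  shows "gs ! (fs ! j) = j"
proof -
  have "length fs = n" using arg_cong[OF assms(1), of length] by simp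
  then show ?thesis using arg_cong[OF assms(1), of "\<lambda>xs. xs ! j"] assms(2) by simp
qed

lemma delta_map_index_le_if_left_inverse:
  assumes "delta_map n m fs" and "map ((!) gs) fs = [0..<n]" and "j < n"
  shows "j \<le> fs ! j"
  using assms(3)
proof (induction j)
  case 0
  then show ?case by simp
next
  case (Suc j)
  have "fs ! j \<le> fs ! Suc j" using assms(1) Suc.prems by (simp add: delta_map_def)
  moreover have "fs ! j \<noteq> fs ! Suc j"
    using map_nth_eq_uptD[OF assms(2)] Suc.prems by (metis Suc_lessD n_not_Suc_n)
  ultimately show ?case using Suc by simp
qed

lemma delta_map_inverse_eq_id:
  assumes f: "delta_map n m fs" and g: "delta_map m n gs"
    and gf: "map ((!) gs) fs = [0..<n]" and fg: "map ((!) fs) gs = [0..<m]"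
  shows "n = m" and "fs = [0..<n]"
proof -
  have bound_le: "k \<le> l"
    if "delta_map k l \<phi>" and "map ((!) \<psi>) \<phi> = [0..<k]" for k l \<phi> \<psi>
  proof (cases k)
    case (Suc k')
    then have "k' \<le> \<phi> ! k'" using delta_map_index_le_if_left_inverse that by blast
    moreover have "\<phi> ! k' < l" using that(1) Suc by (simp add: delta_map_def)
    ultimately show ?thesis using Suc by simp
  qed simp
  show "n = m" using bound_le[OF f gf] bound_le[OF g fg] by simp
  have "fs ! j = j" if "j < n" for j
  proof -
    have "fs ! j < m" using f that by (simp add: delta_map_def)
    then have "fs ! j \<le> gs ! (fs ! j)" using delta_map_index_le_if_left_inverse[OF g fg] by blast
    moreover have "j \<le> fs ! j" using delta_map_index_le_if_left_inverse[OF f gf that] .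
    ultimately show ?thesis using map_nth_eq_uptD[OF gf that] by simp
  qed
  moreover have "length fs = n" using f by (simp add: delta_map_def)
  ultimately show "fs = [0..<n]" by (simp add: list_eq_iff_nth_eq)
qed

lemma hat_upt: "i \<le> k \<Longrightarrow> hat [0..<k] i = i"
  unfolding hat_def by (rule Least_equality) auto

lemma is_isoI:
  assumes "f \<in> Hom K x y" and "g \<in> Hom K y x"
    and "comp K g f = idn K x" and "comp K f g = idn K y"
  shows "is_iso K f"
  using assms unfolding is_iso_def Hom_def by auto

lemma zarr_okD:
  assumes "zarr_ok D F"
  shows "delta_map (zlen (zdom F)) (zlen (zcod F)) (zfs F)"
    and "\<And>i. i \<le> zlen (zcod F) \<Longrightarrow>
           zR F ! i \<in> Hom D (zr (zdom F) ! hat (zfs F) i) (zr (zcod F) ! i)"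
    and "\<And>j. j < zlen (zdom F) \<Longrightarrow>
           zS F ! j \<in> Hom D (zs (zdom F) ! j) (zs (zcod F) ! (zfs F ! j))"
    and "length (zR F) = Suc (zlen (zcod F))" and "length (zS F) = zlen (zdom F)"
  using assms by (auto simp: zarr_ok_def zdom_def zcod_def zfs_def zR_def zS_def)

lemma Zc_comp_eq_idnD:
  assumes "comp (Zc D) G F = idn (Zc D) X"
  shows "map ((!) (zfs G)) (zfs F) = [0..<zlen X]"
    and "\<And>i. i < length (zR G) \<Longrightarrow> comp D (zR G ! i) (zR F ! hat (zfs G) i) = idn D (zr X ! i)"
    and "\<And>j. j < length (zS F) \<Longrightarrow> comp D (zS G ! (zfs F ! j)) (zS F ! j) = idn D (zs X ! j)"
proof -
  have fs: "map ((!) (zfs G)) (zfs F) = [0..<zlen X]"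
    and R: "map (\<lambda>i. comp D (zR G ! i) (zR F ! hat (zfs G) i)) [0..<length (zR G)] = map (idn D) (zr X)"
    and S: "map (\<lambda>j. comp D (zS G ! (zfs F ! j)) (zS F ! j)) [0..<length (zS F)] = map (idn D) (zs X)"
    using assms by (simp_all add: Zc_def)
  show "map ((!) (zfs G)) (zfs F) = [0..<zlen X]" using fs .
  show "comp D (zR G ! i) (zR F ! hat (zfs G) i) = idn D (zr X ! i)" if "i < length (zR G)" for i
    using arg_cong[OF R, of "\<lambda>xs. xs ! i"] arg_cong[OF R, of length] that by (simp del: upt_Suc)
  show "comp D (zS G ! (zfs F ! j)) (zS F ! j) = idn D (zs X ! j)" if "j < length (zS F)" for j
    using arg_cong[OF S, of "\<lambda>xs. xs ! j"] arg_cong[OF S, of length] that by (simp del: upt_Suc)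
qed

lemma is_iso_ZcD:
  assumes "is_iso (Zc D) F"
  shows "pi_vertical F" and "\<forall>h\<in>set (zR F). is_iso D h" and "\<forall>h\<in>set (zS F). is_iso D h"
proof -
  obtain G where F: "zarr_ok D F" and G: "zarr_ok D G"
    and dom_G: "zdom G = zcod F" and cod_G: "zcod G = zdom F"
    and GF: "comp (Zc D) G F = idn (Zc D) (zdom F)"
    and FG: "comp (Zc D) F G = idn (Zc D) (zcod F)"
    using assms unfolding is_iso_def by (auto simp: Zc_def)
  define X Y n where "X = zdom F" and "Y = zcod F" and "n = zlen X"
  note fs_GF = Zc_comp_eq_idnD(1)[OF GF] and fs_FG = Zc_comp_eq_idnD(1)[OF FG]
  have "delta_map n (zlen Y) (zfs F)" and "delta_map (zlen Y) n (zfs G)"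
    using zarr_okD(1)[OF F] zarr_okD(1)[OF G] by (simp_all add: X_def Y_def n_def dom_G cod_G)
  then have len_Y: "zlen Y = n" and fs_F: "zfs F = [0..<n]" and fs_G: "zfs G = [0..<n]"
    using delta_map_inverse_eq_id fs_GF fs_FG unfolding X_def Y_def n_def by metis+
  show "pi_vertical F" using len_Y fs_F by (simp add: pi_vertical_def X_def Y_def n_def)
  have "is_iso D (zR F ! i)" if "i \<le> n" for i
  proof (rule is_isoI)
    show "zR F ! i \<in> Hom D (zr X ! i) (zr Y ! i)" and "zR G ! i \<in> Hom D (zr Y ! i) (zr X ! i)"
      using zarr_okD(2)[OF F, of i] zarr_okD(2)[OF G, of i] that len_Y fs_F fs_G hat_upt
      by (simp_all add: X_def Y_def n_def dom_G cod_G)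
    show "comp D (zR G ! i) (zR F ! i) = idn D (zr X ! i)"
      and "comp D (zR F ! i) (zR G ! i) = idn D (zr Y ! i)"
      using Zc_comp_eq_idnD(2)[OF GF, of i] Zc_comp_eq_idnD(2)[OF FG, of i]
        zarr_okD(4)[OF F] zarr_okD(4)[OF G] that len_Y fs_F fs_G hat_upt
      by (simp_all add: X_def Y_def n_def cod_G)
  qed
  then show "\<forall>h\<in>set (zR F). is_iso D h"
    using zarr_okD(4)[OF F] len_Y by (auto simp: in_set_conv_nth Y_def)
  have "is_iso D (zS F ! j)" if "j < n" for j
  proof (rule is_isoI)
    show "zS F ! j \<in> Hom D (zs X ! j) (zs Y ! j)" and "zS G ! j \<in> Hom D (zs Y ! j) (zs X ! j)"
      using zarr_okD(3)[OF F, of j] zarr_okD(3)[OF G, of j] that len_Y fs_F fs_G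
      by (simp_all add: X_def Y_def n_def dom_G cod_G)
    show "comp D (zS G ! j) (zS F ! j) = idn D (zs X ! j)"
      and "comp D (zS F ! j) (zS G ! j) = idn D (zs Y ! j)"
      using Zc_comp_eq_idnD(3)[OF GF, of j] Zc_comp_eq_idnD(3)[OF FG, of j]
        zarr_okD(5)[OF F] zarr_okD(5)[OF G] that len_Y fs_F fs_G
      by (simp_all add: X_def Y_def n_def dom_G)
  qed
  then show "\<forall>h\<in>set (zS F). is_iso D h"
    using zarr_okD(5)[OF F] by (auto simp: in_set_conv_nth X_def n_def)
qed

theorem lemma3p4:
  fixes C :: "('o,'m) cat" and n :: nat and f :: "('o,'m) zarr"
  assumes "is_category C"
      and "is_iso (Zn C n) f"
  shows "f \<in> degen C n"
  using assms(2)
proof (induction n arbitrary: f)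
  case 0
  then show ?case by (simp add: Zn_def)
next
  case (Suc n)
  then have iso: "is_iso (Zc (Zn C n)) f" by (simp add: Zn_def)
  then have "f \<in> Ar (Zc (Zn C n))" by (simp add: is_iso_def)
  moreover have "pi_vertical f" using is_iso_ZcD(1)[OF iso] .
  moreover have "set (zR f) \<subseteq> degen C n" and "set (zS f) \<subseteq> degen C n"
    using is_iso_ZcD(2,3)[OF iso] Suc.IH by auto
  ultimately show ?case by (auto intro: comp_closure.base)
qed

end
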